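(* Let $\rho$ be an operator on $h$ and let $\rho_0$ denote $\rho$ on slice $0$. Let $\mathcal H_E\cong\mathcal H$ be an environment, $|\Phi^+\rangle=\sum_{\mathbf i}|\mathbf i\rangle|\mathbf i\rangle_E$ (sum over the product basis), and for an operator $A$ on $\mathcal H$ let $$|\mathbf A\rangle:=(A\otimes\mathbb 1_E)|\Phi^+\rangle$$ be its Choi vector. Then, for all operators $O^{(0)},\dots,O^{(N-1)}$ on $h$, $$\Big\langle\big(\textstyle\bigotimes_tO^{(t)}_t\big)^\dagger\Big|\rho_0e^{i\tilde{\mathcal S}}\Big\rangle=\mathrm{tr}\big[\rho\,O^{(N-1)}(\epsilon(N-1))\cdots O^{(1)}(\epsilon)\,O^{(0)}(0)\big],$$ where the left side is the inner product of the Choi vectors of $\big(\bigotimes_tO^{(t)}_t\big)^\dagger$ and of $\rho_0e^{i\tilde{\mathcal S}}$, and $O(s)=e^{isH}Oe^{-isH}$.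
   Context: Bosonic-like setting. Fix integers $d\ge1$, $N\ge1$, a real $\epsilon>0$, and set $T=\epsilon N$. Let $h$ be a $d$-dimensional Hilbert space with orthonormal basis $\{|i\rangle\}$ and trace $\mathrm{tr}$. The space $\mathcal H$. Let $\mathcal H=h^{\otimes N}$, with factors indexed by slices $t=0,\dots,N-1$. $A_t$ denotes $A$ acting on factor $t$, and $\bigotimes_tO^{(t)}_t=O^{(0)}\otimes\dots\otimes O^{(N-1)}$. Quantum action. Let $C$ be the cyclic shift $C|i_0\dots i_{N-1}\rangle=|i_{N-1}i_0\dots i_{N-2}\rangle$, and let $H$ be a hermitian operator on $h$. Define $$e^{i\mathcal S}=C\prod_te^{-i\epsilon H_t},\qquad e^{i\tilde{\mathcal S}}:=e^{iTH_0}e^{i\mathcal S}.$$ *)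

theory Defs
  imports "HOL-Analysis.Analysis"
begin

text \<open>Operators on a finite-dimensional Hilbert space with orthonormal basis indexed by a
finite set I are represented by their matrix entries A x y = <x|A|y> (entries outside I
are irrelevant).\<close>

definition mmult :: "'i set \<Rightarrow> ('i \<Rightarrow> 'i \<Rightarrow> complex) \<Rightarrow> ('i \<Rightarrow> 'i \<Rightarrow> complex) \<Rightarrow> ('i \<Rightarrow> 'i \<Rightarrow> complex)" where
  "mmult I A B = (\<lambda>x y. \<Sum>k\<in>I. A x k * B k y)"

definition mone :: "'i \<Rightarrow> 'i \<Rightarrow> complex" where
  "mone = (\<lambda>x y. if x = y then 1 else 0)"

definition mscale :: "complex \<Rightarrow> ('i \<Rightarrow> 'i \<Rightarrow> complex) \<Rightarrow> ('i \<Rightarrow> 'i \<Rightarrow> complex)" where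
  "mscale c A = (\<lambda>x y. c * A x y)"

definition madj :: "('i \<Rightarrow> 'i \<Rightarrow> complex) \<Rightarrow> ('i \<Rightarrow> 'i \<Rightarrow> complex)" where
  "madj A = (\<lambda>x y. cnj (A y x))"

definition mtrace :: "'i set \<Rightarrow> ('i \<Rightarrow> 'i \<Rightarrow> complex) \<Rightarrow> complex" where
  "mtrace I A = (\<Sum>x\<in>I. A x x)"

fun mpow :: "'i set \<Rightarrow> ('i \<Rightarrow> 'i \<Rightarrow> complex) \<Rightarrow> nat \<Rightarrow> ('i \<Rightarrow> 'i \<Rightarrow> complex)" where
  "mpow I A 0 = mone"
| "mpow I A (Suc n) = mmult I (mpow I A n) A"

definition mexp :: "'i set \<Rightarrow> ('i \<Rightarrow> 'i \<Rightarrow> complex) \<Rightarrow> ('i \<Rightarrow> 'i \<Rightarrow> complex)" where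
  "mexp I A = (\<lambda>x y. \<Sum>k. mpow I A k x y / of_nat (fact k))"

definition mprod :: "'i set \<Rightarrow> ('i \<Rightarrow> 'i \<Rightarrow> complex) list \<Rightarrow> ('i \<Rightarrow> 'i \<Rightarrow> complex)" where
  "mprod I As = foldr (mmult I) As mone"

text \<open>Single-site space h: basis {0..<d}. Many-body space h^{\<otimes>N}: basis = lists
[i_0,...,i_{N-1}] with i_t < d.\<close>
definition sbasis :: "nat \<Rightarrow> nat set" where
  "sbasis d = {..<d}"

definition tbasis :: "nat \<Rightarrow> nat \<Rightarrow> nat list set" where
  "tbasis d N = {xs. length xs = N \<and> set xs \<subseteq> {..<d}}"

definition local_op :: "nat \<Rightarrow> nat \<Rightarrow> (nat \<Rightarrow> nat \<Rightarrow> complex) \<Rightarrow> (nat list \<Rightarrow> nat list \<Rightarrow> complex)" where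
  "local_op N t A = (\<lambda>xs ys. A (xs ! t) (ys ! t) *
      (\<Prod>s\<in>{..<N} - {t}. if xs ! s = ys ! s then 1 else 0))"

definition tensor_op :: "nat \<Rightarrow> (nat \<Rightarrow> nat \<Rightarrow> nat \<Rightarrow> complex) \<Rightarrow> (nat list \<Rightarrow> nat list \<Rightarrow> complex)" where
  "tensor_op N Os = (\<lambda>xs ys. \<Prod>t<N. Os t (xs ! t) (ys ! t))"

definition cshift :: "nat list \<Rightarrow> nat list \<Rightarrow> complex" where
  "cshift = (\<lambda>xs ys. if xs = last ys # butlast ys then 1 else 0)"

definition expiS :: "nat \<Rightarrow> nat \<Rightarrow> real \<Rightarrow> (nat \<Rightarrow> nat \<Rightarrow> complex) \<Rightarrow> (nat list \<Rightarrow> nat list \<Rightarrow> complex)" where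
  "expiS d N \<epsilon> H = mmult (tbasis d N) cshift
     (mprod (tbasis d N)
        (map (\<lambda>t. mexp (tbasis d N) (mscale (- \<i> * complex_of_real \<epsilon>) (local_op N t H))) [0..<N]))"

definition expiS_tilde :: "nat \<Rightarrow> nat \<Rightarrow> real \<Rightarrow> (nat \<Rightarrow> nat \<Rightarrow> complex) \<Rightarrow> (nat list \<Rightarrow> nat list \<Rightarrow> complex)" where
  "expiS_tilde d N \<epsilon> H = mmult (tbasis d N)
     (mexp (tbasis d N) (mscale (\<i> * complex_of_real (\<epsilon> * real N)) (local_op N 0 H)))
     (expiS d N \<epsilon> H)"

definition heis :: "nat \<Rightarrow> (nat \<Rightarrow> nat \<Rightarrow> complex) \<Rightarrow> real \<Rightarrow> (nat \<Rightarrow> nat \<Rightarrow> complex) \<Rightarrow> (nat \<Rightarrow> nat \<Rightarrow> complex)" where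
  "heis d H s A = mmult (sbasis d)
     (mmult (sbasis d) (mexp (sbasis d) (mscale (\<i> * complex_of_real s) H)) A)
     (mexp (sbasis d) (mscale (- \<i> * complex_of_real s) H))"

text \<open>System \<otimes> environment H \<otimes> H_E with H_E \<cong> H: basis pairs (x, e).
|\<Phi>+> = \<Sum>_i |i>|i>_E, and (A \<otimes> 1_E) acting on a vector.\<close>
definition phi_plus :: "'i set \<Rightarrow> ('i \<times> 'i \<Rightarrow> complex)" where
  "phi_plus I = (\<lambda>(x, e). if x \<in> I \<and> x = e then 1 else 0)"

definition apply_sys :: "'i set \<Rightarrow> ('i \<Rightarrow> 'i \<Rightarrow> complex) \<Rightarrow> ('i \<times> 'i \<Rightarrow> complex) \<Rightarrow> ('i \<times> 'i \<Rightarrow> complex)" where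
  "apply_sys I A v = (\<lambda>(x, e). \<Sum>y\<in>I. A x y * v (y, e))"

definition choi :: "'i set \<Rightarrow> ('i \<Rightarrow> 'i \<Rightarrow> complex) \<Rightarrow> ('i \<times> 'i \<Rightarrow> complex)" where
  "choi I A = apply_sys I A (phi_plus I)"

definition vinner :: "'i set \<Rightarrow> ('i \<times> 'i \<Rightarrow> complex) \<Rightarrow> ('i \<times> 'i \<Rightarrow> complex) \<Rightarrow> complex" where
  "vinner I u v = (\<Sum>p\<in>I \<times> I. cnj (u p) * v p)"

end

theory Submission
  imports Defs
begin

text \<open>By the defining property of Choi vectors the left side is the trace
tr[(\<Otimes>_t O_t) \<rho>_0 e^{iTH_0} C U_0 \<cdots> U_{N-1}] with U = e^{-i\<epsilon>H}.
Cycling the propagators U_t to the front, everything left of C becomes a single tensor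
product \<Otimes>_t M_t, and tr[(\<Otimes>_t M_t) C] = tr[M_{N-1} \<cdots> M_0] because C passes
the output index of slice t on to slice t + 1. The remaining single-slice trace
tr[U O_{N-1} \<cdots> U O_0 \<rho> e^{iTH}] telescopes into the Heisenberg-picture product
since e^{isH} e^{is'H} = e^{i(s+s')H}.\<close>

text \<open>Operators are only determined by their entries on I \<times> I, and mone is not
zero outside, so identities such as 1 A = A hold only up to this relation.\<close>

definition mat_eq_on :: "'i set \<Rightarrow> ('i \<Rightarrow> 'i \<Rightarrow> complex) \<Rightarrow> ('i \<Rightarrow> 'i \<Rightarrow> complex) \<Rightarrow> bool" where
  "mat_eq_on I A B \<longleftrightarrow> (\<forall>x\<in>I. \<forall>y\<in>I. A x y = B x y)"

lemma mat_eq_onI: "(\<And>x y. x \<in> I \<Longrightarrow> y \<in> I \<Longrightarrow> A x y = B x y) \<Longrightarrow> mat_eq_on I A B"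
  by (simp add: mat_eq_on_def)

lemma mat_eq_onD: "mat_eq_on I A B \<Longrightarrow> x \<in> I \<Longrightarrow> y \<in> I \<Longrightarrow> A x y = B x y"
  by (simp add: mat_eq_on_def)

lemma mat_eq_on_refl [simp]: "mat_eq_on I A A"
  by (simp add: mat_eq_on_def)

lemma mat_eq_on_sym: "mat_eq_on I A B \<Longrightarrow> mat_eq_on I B A"
  by (simp add: mat_eq_on_def)

lemma mat_eq_on_trans [trans]: "mat_eq_on I A B \<Longrightarrow> mat_eq_on I B C \<Longrightarrow> mat_eq_on I A C"
  by (simp add: mat_eq_on_def)

lemma eq_mat_eq_on_trans [trans]: "A = B \<Longrightarrow> mat_eq_on I B C \<Longrightarrow> mat_eq_on I A C"
  by simp

lemma mat_eq_on_eq_trans [trans]: "mat_eq_on I A B \<Longrightarrow> B = C \<Longrightarrow> mat_eq_on I A C"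
  by simp

lemma mmult_cong: "mat_eq_on I A A' \<Longrightarrow> mat_eq_on I B B' \<Longrightarrow> mat_eq_on I (mmult I A B) (mmult I A' B')"
  unfolding mat_eq_on_def mmult_def by (auto intro!: sum.cong)

lemma mmult_assoc: "mmult I (mmult I A B) C = mmult I A (mmult I B C)"
  unfolding mmult_def
  by (simp add: sum_distrib_left sum_distrib_right mult.assoc) (intro ext sum.swap)

lemma mmult_mone_left: "finite I \<Longrightarrow> mat_eq_on I (mmult I mone A) A"
  unfolding mat_eq_on_def mmult_def mone_def
  by (simp add: if_distrib[of "\<lambda>c. c * _"] cong: if_cong)

lemma mmult_mone_right: "finite I \<Longrightarrow> mat_eq_on I (mmult I A mone) A"
  unfolding mat_eq_on_def mmult_def mone_def
  by (simp add: if_distrib[of "\<lambda>c. _ * c"] cong: if_cong)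

lemma mtrace_mmult_commute: "mtrace I (mmult I A B) = mtrace I (mmult I B A)"
  unfolding mtrace_def mmult_def by (auto simp: mult.commute intro: sum.swap)

lemma mtrace_cong: "mat_eq_on I A B \<Longrightarrow> mtrace I A = mtrace I B"
  by (simp add: mtrace_def mat_eq_on_def)

lemma mprod_Nil: "mprod I [] = mone"
  by (simp add: mprod_def)

lemma mprod_Cons: "mprod I (A # As) = mmult I A (mprod I As)"
  by (simp add: mprod_def)

lemma mprod_append:
  assumes "finite I"
  shows "mat_eq_on I (mprod I (As @ Bs)) (mmult I (mprod I As) (mprod I Bs))"
proof (induction As)
  case Nil
  show ?case by (simp add: mprod_Nil mat_eq_on_sym[OF mmult_mone_left[OF assms]])
next
  case (Cons A As)
  then show ?case by (simp add: mprod_Cons mmult_assoc mmult_cong)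
qed

lemma mprod_single: "finite I \<Longrightarrow> mat_eq_on I (mprod I [A]) A"
  by (simp add: mprod_Cons mprod_Nil mmult_mone_right)

lemma mprod_snoc:
  assumes "finite I"
  shows "mat_eq_on I (mprod I (As @ [A])) (mmult I (mprod I As) A)"
  using mprod_append[OF assms] mmult_cong[OF mat_eq_on_refl mprod_single[OF assms]]
  by (rule mat_eq_on_trans)

lemma mprod_cong:
  "(\<And>x. x \<in> set xs \<Longrightarrow> mat_eq_on I (f x) (g x)) \<Longrightarrow>
    mat_eq_on I (mprod I (map f xs)) (mprod I (map g xs))"
  by (induction xs) (auto simp: mprod_Cons mprod_Nil intro: mmult_cong)

lemma rev_upt_Suc_0: "rev [0..<Suc n] = map Suc (rev [0..<n]) @ [0]"
  by (simp only: upt_conv_Cons[OF zero_less_Suc] map_Suc_upt[symmetric] rev.simps rev_map)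

lemma mprod_rev_upt_update_0:
  assumes "finite I"
  shows "mat_eq_on I (mprod I (map (f(0 := mmult I (f 0) Z)) (rev [0..<Suc n])))
           (mmult I (mprod I (map f (rev [0..<Suc n]))) Z)"
proof -
  let ?fs = "map (f \<circ> Suc) (rev [0..<n])"
  have "f(0 := mmult I (f 0) Z) \<circ> Suc = f \<circ> Suc"
    by (simp add: fun_eq_iff)
  then have "mat_eq_on I (mprod I (map (f(0 := mmult I (f 0) Z)) (rev [0..<Suc n])))
               (mmult I (mprod I ?fs) (mmult I (f 0) Z))"
    by (simp add: rev_upt_Suc_0 mprod_snoc[OF assms] del: upt_Suc)
  also have "\<dots> = mmult I (mmult I (mprod I ?fs) (f 0)) Z"
    by (simp add: mmult_assoc)
  also have "mat_eq_on I \<dots> (mmult I (mprod I (map f (rev [0..<Suc n]))) Z)"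
    by (intro mmult_cong mat_eq_on_refl)
      (simp add: rev_upt_Suc_0 mat_eq_on_sym[OF mprod_snoc[OF assms]] del: upt_Suc)
  finally show ?thesis .
qed

section \<open>Matrix exponential\<close>

lemma mpow_mscale: "mpow I (mscale c A) k = mscale (c ^ k) (mpow I A k)"
  by (induction k) (simp_all add: mscale_def mmult_def sum_distrib_left fun_eq_iff mult_ac)

lemma mpow_add:
  assumes "finite I"
  shows "mat_eq_on I (mmult I (mpow I A m) (mpow I A n)) (mpow I A (m + n))"
proof (induction n)
  case 0
  show ?case by (simp add: mmult_mone_right[OF assms])
next
  case (Suc n)
  have "mmult I (mpow I A m) (mpow I A (Suc n)) = mmult I (mmult I (mpow I A m) (mpow I A n)) A"
    by (simp add: mmult_assoc)
  also have "mat_eq_on I \<dots> (mmult I (mpow I A (m + n)) A)"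
    by (rule mmult_cong[OF Suc mat_eq_on_refl])
  finally show ?case by simp
qed

definition mnorm :: "'i set \<Rightarrow> ('i \<Rightarrow> 'i \<Rightarrow> complex) \<Rightarrow> real" where
  "mnorm I A = (\<Sum>x\<in>I. \<Sum>y\<in>I. norm (A x y))"

lemma mnorm_nonneg: "mnorm I A \<ge> 0"
  unfolding mnorm_def by (intro sum_nonneg) auto

lemma norm_mpow_le:
  assumes fin: "finite I" and "x \<in> I" "y \<in> I"
  shows "norm (mpow I A n x y) \<le> mnorm I A ^ n"
  using assms(2,3)
proof (induction n arbitrary: x y)
  case 0
  then show ?case by (simp add: mone_def)
next
  case (Suc n)
  have column: "(\<Sum>k\<in>I. norm (A k y)) \<le> mnorm I A"
    unfolding mnorm_def
    by (rule sum_mono) (rule member_le_sum[OF Suc.prems(2)], auto simp: fin)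
  have "norm (mpow I A (Suc n) x y) \<le> (\<Sum>k\<in>I. norm (mpow I A n x k) * norm (A k y))"
    by (simp add: mmult_def) (rule order_trans[OF norm_sum], simp add: norm_mult)
  also have "\<dots> \<le> (\<Sum>k\<in>I. mnorm I A ^ n * norm (A k y))"
    by (rule sum_mono) (use Suc in \<open>auto intro: mult_right_mono\<close>)
  also have "\<dots> \<le> mnorm I A ^ n * mnorm I A"
    by (simp add: sum_distrib_left[symmetric] column mnorm_nonneg mult_left_mono)
  finally show ?case by (simp add: mult.commute)
qed

lemma mexp_series_summable:
  assumes "finite I" "x \<in> I" "y \<in> I"
  shows "summable (\<lambda>k. norm (c ^ k * mpow I A k x y / of_nat (fact k)))"
proof (rule summable_comparison_test'[OF summable_exp_generic[of "norm c * mnorm I A"]])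
  fix k :: nat
  have "norm (c ^ k * mpow I A k x y / of_nat (fact k)) \<le> norm c ^ k * mnorm I A ^ k / fact k"
    by (simp add: norm_mult norm_divide norm_power divide_right_mono mult_left_mono norm_mpow_le[OF assms])
  then show "norm (norm (c ^ k * mpow I A k x y / of_nat (fact k))) \<le> (norm c * mnorm I A) ^ k /\<^sub>R fact k"
    by (simp add: power_mult_distrib divide_inverse_commute)
qed

lemma mexp_mscale: "mexp I (mscale c A) x y = (\<Sum>k. c ^ k * mpow I A k x y / of_nat (fact k))"
  unfolding mexp_def mpow_mscale by (simp add: mscale_def)

lemma exp_series_coeff_add:
  fixes a b :: complex
  shows "(\<Sum>i\<le>n. a ^ i / fact i * (b ^ (n - i) / fact (n - i))) = (a + b) ^ n / fact n"
  using exp_series_add_commuting[of a b n] by (simp add: scaleR_conv_of_real divide_inverse mult_ac)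

lemma mexp_mscale_add:
  assumes fin: "finite I"
  shows "mat_eq_on I (mmult I (mexp I (mscale a A)) (mexp I (mscale b A))) (mexp I (mscale (a + b) A))"
proof (rule mat_eq_onI)
  fix x y assume x: "x \<in> I" and y: "y \<in> I"
  define P where "P = mpow I A"
  define f where "f = (\<lambda>c u v k. c ^ k * P k u v / of_nat (fact k))"
  have sf: "summable (\<lambda>k. norm (f c u v k))" if "u \<in> I" "v \<in> I" for c u v
    unfolding f_def P_def by (rule mexp_series_summable[OF fin that])
  have coeff: "(\<Sum>j\<in>I. \<Sum>i\<le>n. f a x j i * f b j y (n - i)) = f (a + b) x y n" for n
  proof -
    have "(\<Sum>j\<in>I. \<Sum>i\<le>n. f a x j i * f b j y (n - i))
        = (\<Sum>i\<le>n. a ^ i / fact i * (b ^ (n - i) / fact (n - i)) * (\<Sum>j\<in>I. P i x j * P (n - i) j y))"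
      unfolding f_def by (subst sum.swap) (simp add: sum_distrib_left sum_divide_distrib mult_ac)
    also have "\<dots> = (\<Sum>i\<le>n. a ^ i / fact i * (b ^ (n - i) / fact (n - i)) * P n x y)"
      using mat_eq_onD[OF mpow_add[OF fin] x y] by (intro sum.cong) (simp_all add: P_def mmult_def)
    also have "\<dots> = (a + b) ^ n / fact n * P n x y"
      by (simp only: sum_distrib_right[symmetric] exp_series_coeff_add)
    also have "\<dots> = f (a + b) x y n"
      by (simp add: f_def)
    finally show ?thesis .
  qed
  have "mmult I (mexp I (mscale a A)) (mexp I (mscale b A)) x y
      = (\<Sum>j\<in>I. (\<Sum>k. f a x j k) * (\<Sum>k. f b j y k))"
    by (simp add: mmult_def mexp_mscale f_def P_def)
  also have "\<dots> = (\<Sum>j\<in>I. \<Sum>n. \<Sum>i\<le>n. f a x j i * f b j y (n - i))"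
    using sf x y by (intro sum.cong refl Cauchy_product) auto
  also have "\<dots> = (\<Sum>n. \<Sum>j\<in>I. \<Sum>i\<le>n. f a x j i * f b j y (n - i))"
    using sf x y by (intro suminf_sum[symmetric] summable_Cauchy_product) auto
  also have "\<dots> = mexp I (mscale (a + b) A) x y"
    by (simp only: coeff) (simp add: mexp_mscale f_def P_def)
  finally show "mmult I (mexp I (mscale a A)) (mexp I (mscale b A)) x y = mexp I (mscale (a + b) A) x y" .
qed

lemma mexp_mscale_0: "mat_eq_on I (mexp I (mscale 0 A)) mone"
proof (rule mat_eq_onI)
  fix x y
  have "mexp I (mscale 0 A) x y = (\<Sum>k. mpow I A k x y / of_nat (fact k) * 0 ^ k)"
    by (simp add: mexp_mscale mult_ac)
  also have "\<dots> = mone x y"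
    by (subst powser_zero) simp
  finally show "mexp I (mscale 0 A) x y = mone x y" .
qed

section \<open>Tensor products over the time slices\<close>

lemma tbasis_0: "tbasis d 0 = {[]}"
  by (auto simp: tbasis_def)

lemma tbasis_Suc: "tbasis d (Suc n) = (\<lambda>(x, r). x # r) ` ({..<d} \<times> tbasis d n)"
  by (auto simp: tbasis_def length_Suc_conv image_iff)

lemma finite_tbasis [simp]: "finite (tbasis d n)"
  by (induction n) (auto simp: tbasis_0 tbasis_Suc)

lemma finite_sbasis [simp]: "finite (sbasis d)"
  by (simp add: sbasis_def)

lemma tbasis_length: "xs \<in> tbasis d N \<Longrightarrow> length xs = N"
  by (simp add: tbasis_def)

lemma tbasis_nth: "xs \<in> tbasis d N \<Longrightarrow> t < N \<Longrightarrow> xs ! t < d"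
  by (auto simp: tbasis_def dest!: nth_mem)

lemma sum_tbasis_Suc: "(\<Sum>k\<in>tbasis d (Suc n). g k) = (\<Sum>x<d. \<Sum>r\<in>tbasis d n. g (x # r))"
proof -
  have "inj_on (\<lambda>(x, r). x # r) ({..<d} \<times> tbasis d n)"
    by (auto simp: inj_on_def)
  then show ?thesis
    by (simp add: tbasis_Suc sum.reindex sum.cartesian_product[symmetric] comp_def prod.case_distrib)
qed

lemma sum_tbasis_prod: "(\<Sum>k\<in>tbasis d n. \<Prod>t<n. F t (k ! t)) = (\<Prod>t<n. \<Sum>j<d. F t j :: complex)"
proof (induction n arbitrary: F)
  case 0
  show ?case by (simp add: tbasis_0)
next
  case (Suc n)
  have "(\<Sum>k\<in>tbasis d (Suc n). \<Prod>t<Suc n. F t (k ! t))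
      = (\<Sum>x<d. F 0 x * (\<Sum>r\<in>tbasis d n. \<Prod>t<n. F (Suc t) (r ! t)))"
    by (simp add: sum_tbasis_Suc prod.lessThan_Suc_shift sum_distrib_left del: prod.lessThan_Suc)
  also have "\<dots> = (\<Prod>t<Suc n. \<Sum>j<d. F t j)"
    by (simp add: Suc.IH[of "\<lambda>t. F (Suc t)"] sum_distrib_right prod.lessThan_Suc_shift
             del: prod.lessThan_Suc)
  finally show ?case .
qed

lemma tensor_op_mmult:
  "mmult (tbasis d N) (tensor_op N A) (tensor_op N B) = tensor_op N (\<lambda>t. mmult (sbasis d) (A t) (B t))"
proof (intro ext)
  fix xs ys
  have "mmult (tbasis d N) (tensor_op N A) (tensor_op N B) xs ys
      = (\<Sum>k\<in>tbasis d N. \<Prod>t<N. A t (xs ! t) (k ! t) * B t (k ! t) (ys ! t))"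
    by (simp add: mmult_def tensor_op_def prod.distrib)
  also have "\<dots> = tensor_op N (\<lambda>t. mmult (sbasis d) (A t) (B t)) xs ys"
    by (simp add: sum_tbasis_prod[where F = "\<lambda>t j. A t (xs ! t) j * B t j (ys ! t)"]
        tensor_op_def mmult_def sbasis_def)
  finally show "mmult (tbasis d N) (tensor_op N A) (tensor_op N B) xs ys
      = tensor_op N (\<lambda>t. mmult (sbasis d) (A t) (B t)) xs ys" .
qed

lemma tensor_op_cong:
  assumes "\<And>t. t < N \<Longrightarrow> mat_eq_on (sbasis d) (A t) (B t)"
  shows "mat_eq_on (tbasis d N) (tensor_op N A) (tensor_op N B)"
  using assms by (auto simp: mat_eq_on_def tensor_op_def sbasis_def tbasis_nth intro!: prod.cong)

lemma tensor_op_mone: "mat_eq_on (tbasis d N) (tensor_op N (\<lambda>_. mone)) mone"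
proof (rule mat_eq_onI)
  fix xs ys assume "xs \<in> tbasis d N" "ys \<in> tbasis d N"
  then have "(\<forall>t<N. xs ! t = ys ! t) \<longleftrightarrow> xs = ys"
    by (auto simp: tbasis_length list_eq_iff_nth_eq)
  then show "tensor_op N (\<lambda>_. mone) xs ys = mone xs ys"
    by (auto simp: tensor_op_def mone_def prod_zero_iff)
qed

lemma local_op_eq_tensor_op:
  assumes "t < N"
  shows "local_op N t A = tensor_op N ((\<lambda>_. mone)(t := A))"
proof (intro ext)
  fix xs ys
  have "tensor_op N ((\<lambda>_. mone)(t := A)) xs ys
      = (\<Prod>s\<in>insert t ({..<N} - {t}). ((\<lambda>_. mone)(t := A)) s (xs ! s) (ys ! s))"
    using assms by (simp add: tensor_op_def insert_absorb)
  also have "\<dots> = A (xs ! t) (ys ! t) * (\<Prod>s\<in>{..<N} - {t}. mone (xs ! s) (ys ! s))"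
    by (subst prod.insert) (auto intro!: prod.cong)
  also have "\<dots> = local_op N t A xs ys"
    by (simp add: local_op_def mone_def)
  finally show "local_op N t A xs ys = tensor_op N ((\<lambda>_. mone)(t := A)) xs ys" ..
qed

lemma local_op_mscale: "mscale c (local_op N t A) = local_op N t (mscale c A)"
  by (simp add: mscale_def local_op_def fun_eq_iff mult.assoc)

lemma tensor_op_mmult_local_op:
  assumes "t < N"
  shows "mat_eq_on (tbasis d N) (mmult (tbasis d N) (tensor_op N A) (local_op N t B))
           (tensor_op N (A(t := mmult (sbasis d) (A t) B)))"
proof -
  have "mmult (tbasis d N) (tensor_op N A) (local_op N t B)
      = tensor_op N (\<lambda>s. mmult (sbasis d) (A s) (((\<lambda>_. mone)(t := B)) s))"
    unfolding local_op_eq_tensor_op[OF assms] by (rule tensor_op_mmult)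
  also have "mat_eq_on (tbasis d N) \<dots> (tensor_op N (A(t := mmult (sbasis d) (A t) B)))"
    by (rule tensor_op_cong) (simp add: mmult_mone_right)
  finally show ?thesis .
qed

lemma mpow_local_op:
  assumes "t < N"
  shows "mat_eq_on (tbasis d N) (mpow (tbasis d N) (local_op N t A) k) (local_op N t (mpow (sbasis d) A k))"
proof (induction k)
  case 0
  have "local_op N t mone = tensor_op N (\<lambda>_. mone)"
    by (simp add: local_op_eq_tensor_op[OF assms] fun_upd_def)
  then show ?case
    using mat_eq_on_sym[OF tensor_op_mone] by (metis mpow.simps(1))
next
  case (Suc k)
  have "mat_eq_on (tbasis d N) (mpow (tbasis d N) (local_op N t A) (Suc k))
          (mmult (tbasis d N) (local_op N t (mpow (sbasis d) A k)) (local_op N t A))"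
    by (simp add: mmult_cong[OF Suc mat_eq_on_refl])
  also have "mat_eq_on (tbasis d N) \<dots> (local_op N t (mpow (sbasis d) A (Suc k)))"
    using tensor_op_mmult_local_op[OF assms, of d "(\<lambda>_. mone)(t := mpow (sbasis d) A k)" A]
    by (simp add: local_op_eq_tensor_op[OF assms])
  finally show ?case .
qed

lemma mexp_local_op:
  assumes "t < N"
  shows "mat_eq_on (tbasis d N) (mexp (tbasis d N) (local_op N t A)) (local_op N t (mexp (sbasis d) A))"
proof (rule mat_eq_onI)
  fix xs ys assume "xs \<in> tbasis d N" "ys \<in> tbasis d N"
  then have "mexp (tbasis d N) (local_op N t A) xs ys
      = (\<Sum>k. local_op N t (mpow (sbasis d) A k) xs ys / of_nat (fact k))"
    using mat_eq_onD[OF mpow_local_op[OF assms]] by (simp add: mexp_def)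
  also have "\<dots> = local_op N t (mexp (sbasis d) A) xs ys"
  proof -
    have "(\<Prod>s\<in>{..<N} - {t}. if xs ! s = ys ! s then 1 else 0)
        = (if \<forall>s\<in>{..<N} - {t}. xs ! s = ys ! s then 1 else 0 :: complex)"
      by (auto simp: prod_zero_iff)
    then show ?thesis
      by (simp add: local_op_def mexp_def)
  qed
  finally show "mexp (tbasis d N) (local_op N t A) xs ys = local_op N t (mexp (sbasis d) A) xs ys" .
qed

lemma mprod_local_op_upt:
  assumes "m \<le> N"
  shows "mat_eq_on (tbasis d N) (mprod (tbasis d N) (map (\<lambda>t. local_op N t (A t)) [m..<N]))
           (tensor_op N (\<lambda>s. if m \<le> s then A s else mone))"
  using assms
proof (induction "N - m" arbitrary: m)
  case 0
  then have "mat_eq_on (tbasis d N) (tensor_op N (\<lambda>s. if m \<le> s then A s else mone)) (tensor_op N (\<lambda>_. mone))"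
    by (auto intro!: tensor_op_cong)
  also have "mat_eq_on (tbasis d N) \<dots> mone"
    by (rule tensor_op_mone)
  finally show ?case
    using 0 by (simp add: mprod_Nil mat_eq_on_sym)
next
  case (Suc k)
  let ?T = "tbasis d N" and ?S = "sbasis d"
  have m: "m < N"
    using Suc by simp
  have "mprod ?T (map (\<lambda>t. local_op N t (A t)) [m..<N])
      = mmult ?T (tensor_op N ((\<lambda>_. mone)(m := A m))) (mprod ?T (map (\<lambda>t. local_op N t (A t)) [Suc m..<N]))"
    by (simp add: upt_conv_Cons[OF m] mprod_Cons local_op_eq_tensor_op[OF m])
  also have "mat_eq_on ?T \<dots> (mmult ?T (tensor_op N ((\<lambda>_. mone)(m := A m)))
                            (tensor_op N (\<lambda>s. if Suc m \<le> s then A s else mone)))"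
    using Suc.hyps(1)[of "Suc m"] Suc.hyps(2) m by (intro mmult_cong) auto
  also have "\<dots> = tensor_op N (\<lambda>s. mmult ?S (((\<lambda>_. mone)(m := A m)) s)
                                   (if Suc m \<le> s then A s else mone))"
    by (rule tensor_op_mmult)
  also have "mat_eq_on ?T \<dots> (tensor_op N (\<lambda>s. if m \<le> s then A s else mone))"
  proof (rule tensor_op_cong)
    fix s
    show "mat_eq_on ?S (mmult ?S (((\<lambda>_. mone)(m := A m)) s) (if Suc m \<le> s then A s else mone))
            (if m \<le> s then A s else mone)"
      by (cases "s = m") (auto simp: mmult_mone_left mmult_mone_right)
  qed
  finally show ?case .
qed

lemma mprod_mexp_local_op:
  "mat_eq_on (tbasis d N) (mprod (tbasis d N) (map (\<lambda>t. mexp (tbasis d N) (mscale c (local_op N t A))) [0..<N]))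
     (tensor_op N (\<lambda>_. mexp (sbasis d) (mscale c A)))"
proof -
  have "mat_eq_on (tbasis d N) (mprod (tbasis d N) (map (\<lambda>t. mexp (tbasis d N) (mscale c (local_op N t A))) [0..<N]))
          (mprod (tbasis d N) (map (\<lambda>t. local_op N t (mexp (sbasis d) (mscale c A))) [0..<N]))"
    by (rule mprod_cong) (simp add: local_op_mscale mexp_local_op)
  also have "mat_eq_on (tbasis d N) \<dots> (tensor_op N (\<lambda>_. mexp (sbasis d) (mscale c A)))"
    using mprod_local_op_upt[of 0 N d "\<lambda>_. mexp (sbasis d) (mscale c A)"] by simp
  finally show ?thesis .
qed

section \<open>The cyclic shift\<close>

lemma path_sum_eq_mprod_rev_upt:
  fixes f :: "nat \<Rightarrow> nat \<Rightarrow> nat \<Rightarrow> complex"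
  assumes "a < d" "b < d"
  shows "(\<Sum>r\<in>tbasis d n. \<Prod>i<Suc n. f i ((r @ [b]) ! i) ((a # r) ! i))
       = mprod (sbasis d) (map f (rev [0..<Suc n])) b a"
  using assms(1)
proof (induction n arbitrary: a f)
  case 0
  then show ?case
    using mat_eq_onD[OF mprod_single[OF finite_sbasis]] assms(2) by (simp add: tbasis_0 sbasis_def)
next
  case (Suc n)
  let ?S = "sbasis d" and ?g = "\<lambda>i. f (Suc i)"
  have "(\<Sum>r\<in>tbasis d (Suc n). \<Prod>i<Suc (Suc n). f i ((r @ [b]) ! i) ((a # r) ! i))
      = (\<Sum>x<d. f 0 x a * (\<Sum>r\<in>tbasis d n. \<Prod>i<Suc n. ?g i ((r @ [b]) ! i) ((x # r) ! i)))"
    by (simp add: sum_tbasis_Suc prod.lessThan_Suc_shift sum_distrib_left del: prod.lessThan_Suc)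
  also have "\<dots> = (\<Sum>x<d. mprod ?S (map ?g (rev [0..<Suc n])) b x * f 0 x a)"
    by (intro sum.cong refl) (simp add: Suc.IH[of _ ?g] mult.commute del: prod.lessThan_Suc upt_Suc)
  also have "\<dots> = mmult ?S (mprod ?S (map ?g (rev [0..<Suc n]))) (f 0) b a"
    by (simp add: mmult_def sbasis_def)
  also have "\<dots> = mprod ?S (map f (rev [0..<Suc (Suc n)])) b a"
  proof -
    have "map f (rev [0..<Suc (Suc n)]) = map ?g (rev [0..<Suc n]) @ [f 0]"
      by (simp only: rev_upt_Suc_0[of "Suc n"] map_append map_map) (simp add: comp_def)
    then have "mat_eq_on ?S (mprod ?S (map f (rev [0..<Suc (Suc n)])))
                 (mmult ?S (mprod ?S (map ?g (rev [0..<Suc n]))) (f 0))"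
      by (simp only: mprod_snoc[OF finite_sbasis])
    then show ?thesis
      using Suc.prems assms(2) by (auto simp: sbasis_def dest: mat_eq_onD)
  qed
  finally show ?case .
qed

lemma mtrace_tensor_op_cshift:
  "mtrace (tbasis d (Suc n)) (mmult (tbasis d (Suc n)) (tensor_op (Suc n) M) cshift)
     = mtrace (sbasis d) (mprod (sbasis d) (map M (rev [0..<Suc n])))"
proof -
  let ?T = "tbasis d (Suc n)" and ?X = "tensor_op (Suc n) M"
  have cshift: "cshift k i = (if i = tl k @ [hd k] then 1 else 0)" if "k \<in> ?T" "i \<in> ?T" for k i
  proof -
    have "k \<noteq> []" "i \<noteq> []"
      using that by (auto simp: tbasis_def)
    then have "k = last i # butlast i \<longleftrightarrow> i = tl k @ [hd k]"
      by (metis append_butlast_last_id butlast_snoc last_snoc list.collapse list.sel(1) list.sel(3))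
    then show ?thesis
      by (simp add: cshift_def)
  qed
  have rotate_mem: "tl k @ [hd k] \<in> ?T" if "k \<in> ?T" for k
    using that by (cases k) (auto simp: tbasis_def)
  have "mtrace ?T (mmult ?T ?X cshift) = (\<Sum>i\<in>?T. \<Sum>k\<in>?T. ?X i k * cshift k i)"
    by (simp add: mtrace_def mmult_def)
  also have "\<dots> = (\<Sum>k\<in>?T. \<Sum>i\<in>?T. ?X i k * cshift k i)"
    by (rule sum.swap)
  also have "\<dots> = (\<Sum>k\<in>?T. ?X (tl k @ [hd k]) k)"
    using rotate_mem by (intro sum.cong refl) (simp add: cshift if_distrib[of "\<lambda>c. _ * c"] cong: if_cong)
  also have "\<dots> = (\<Sum>a<d. \<Sum>r\<in>tbasis d n. \<Prod>i<Suc n. M i ((r @ [a]) ! i) ((a # r) ! i))"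
    by (simp add: sum_tbasis_Suc tensor_op_def)
  also have "\<dots> = (\<Sum>a<d. mprod (sbasis d) (map M (rev [0..<Suc n])) a a)"
    by (intro sum.cong refl) (simp add: path_sum_eq_mprod_rev_upt del: prod.lessThan_Suc upt_Suc)
  finally show ?thesis
    by (simp add: mtrace_def sbasis_def)
qed

lemma choi_apply: "finite I \<Longrightarrow> e \<in> I \<Longrightarrow> choi I A (x, e) = A x e"
  unfolding choi_def apply_sys_def phi_plus_def
  by (simp add: if_distrib[of "\<lambda>c. _ * c"] cong: if_cong)

lemma vinner_choi_madj:
  assumes "finite I"
  shows "vinner I (choi I (madj A)) (choi I B) = mtrace I (mmult I A B)"
proof -
  have "vinner I (choi I (madj A)) (choi I B) = (\<Sum>x\<in>I. \<Sum>e\<in>I. A e x * B x e)"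
    unfolding vinner_def sum.cartesian_product
    by (intro sum.cong refl) (auto simp: choi_apply assms madj_def)
  also have "\<dots> = mtrace I (mmult I A B)"
    unfolding mtrace_def mmult_def by (rule sum.swap)
  finally show ?thesis .
qed

section \<open>Time evolution on a single slice\<close>

definition evol :: "nat \<Rightarrow> (nat \<Rightarrow> nat \<Rightarrow> complex) \<Rightarrow> real \<Rightarrow> (nat \<Rightarrow> nat \<Rightarrow> complex)" where
  "evol d H s = mexp (sbasis d) (mscale (\<i> * complex_of_real s) H)"

lemma evol_add: "mat_eq_on (sbasis d) (mmult (sbasis d) (evol d H s) (evol d H s')) (evol d H (s + s'))"
  using mexp_mscale_add[OF finite_sbasis, where a = "\<i> * complex_of_real s" and A = H
      and b = "\<i> * complex_of_real s'"]
  by (simp add: evol_def distrib_left)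

lemma evol_0: "mat_eq_on (sbasis d) (evol d H 0) mone"
  using mexp_mscale_0 by (simp add: evol_def)

lemma evol_cancel: "mat_eq_on (sbasis d) (mmult (sbasis d) (evol d H (- s)) (mmult (sbasis d) (evol d H s) A)) A"
proof -
  have "mat_eq_on (sbasis d) (mmult (sbasis d) (evol d H (- s)) (evol d H s)) mone"
    using evol_add[of d H "- s" s] evol_0 by (simp add: mat_eq_on_def)
  then have "mat_eq_on (sbasis d) (mmult (sbasis d) (mmult (sbasis d) (evol d H (- s)) (evol d H s)) A)
               (mmult (sbasis d) mone A)"
    by (rule mmult_cong) simp
  then show ?thesis
    using mmult_mone_left[OF finite_sbasis] by (simp add: mmult_assoc mat_eq_on_def)
qed

lemma mprod_heis:
  "mat_eq_on (sbasis d) (mprod (sbasis d) (map (\<lambda>t. heis d H (\<epsilon> * real t) (A t)) (rev [0..<n])))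
     (mmult (sbasis d) (evol d H (\<epsilon> * real n))
        (mprod (sbasis d) (map (\<lambda>t. mmult (sbasis d) (evol d H (- \<epsilon>)) (A t)) (rev [0..<n]))))"
proof (induction n)
  case 0
  show ?case
    using mat_eq_on_sym[OF mat_eq_on_trans[OF mmult_mone_right[OF finite_sbasis] evol_0]]
    by (simp add: mprod_Nil)
next
  case (Suc n)
  let ?S = "sbasis d" and ?E = "evol d H" and ?s = "\<epsilon> * real n"
  let ?Q = "mprod ?S (map (\<lambda>t. mmult ?S (?E (- \<epsilon>)) (A t)) (rev [0..<n]))"
  have "mprod ?S (map (\<lambda>t. heis d H (\<epsilon> * real t) (A t)) (rev [0..<Suc n]))
      = mmult ?S (heis d H ?s (A n)) (mprod ?S (map (\<lambda>t. heis d H (\<epsilon> * real t) (A t)) (rev [0..<n])))"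
    by (simp add: mprod_Cons)
  also have "mat_eq_on ?S \<dots> (mmult ?S (heis d H ?s (A n)) (mmult ?S (?E ?s) ?Q))"
    by (rule mmult_cong[OF mat_eq_on_refl Suc])
  also have "\<dots> = mmult ?S (?E ?s) (mmult ?S (A n) (mmult ?S (?E (- ?s)) (mmult ?S (?E ?s) ?Q)))"
    by (simp add: heis_def evol_def mmult_assoc)
  also have "mat_eq_on ?S \<dots> (mmult ?S (?E ?s) (mmult ?S (A n) ?Q))"
    by (intro mmult_cong mat_eq_on_refl evol_cancel)
  also have "mat_eq_on ?S \<dots> (mmult ?S (mmult ?S (?E (\<epsilon> * real (Suc n))) (?E (- \<epsilon>))) (mmult ?S (A n) ?Q))"
    using evol_add[of d H "\<epsilon> * real (Suc n)" "- \<epsilon>"]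
    by (intro mmult_cong mat_eq_on_refl) (simp_all add: algebra_simps mat_eq_on_sym)
  also have "\<dots> = mmult ?S (?E (\<epsilon> * real (Suc n)))
                     (mprod ?S (map (\<lambda>t. mmult ?S (?E (- \<epsilon>)) (A t)) (rev [0..<Suc n])))"
    by (simp add: mprod_Cons mmult_assoc)
  finally show ?case .
qed

lemma expiS_tilde_factor:
  assumes "0 < N"
  shows "mat_eq_on (tbasis d N) (expiS_tilde d N \<epsilon> H)
           (mmult (tbasis d N) (local_op N 0 (evol d H (\<epsilon> * real N)))
              (mmult (tbasis d N) cshift (tensor_op N (\<lambda>_. evol d H (- \<epsilon>)))))"
proof -
  let ?T = "tbasis d N"
  have "mat_eq_on ?T (mexp ?T (mscale (\<i> * complex_of_real (\<epsilon> * real N)) (local_op N 0 H)))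
          (local_op N 0 (evol d H (\<epsilon> * real N)))"
    using mexp_local_op[OF assms] by (simp add: local_op_mscale evol_def)
  moreover have "mat_eq_on ?T (mprod ?T (map (\<lambda>t. mexp ?T (mscale (- \<i> * complex_of_real \<epsilon>) (local_op N t H))) [0..<N]))
          (tensor_op N (\<lambda>_. evol d H (- \<epsilon>)))"
    using mprod_mexp_local_op by (simp add: evol_def)
  ultimately show ?thesis
    unfolding expiS_tilde_def expiS_def by (intro mmult_cong mat_eq_on_refl)
qed

lemma vinner_choi_expiS_tilde:
  assumes "0 < N"
  shows "vinner (tbasis d N) (choi (tbasis d N) (madj (tensor_op N Os)))
           (choi (tbasis d N) (mmult (tbasis d N) (local_op N 0 \<rho>) (expiS_tilde d N \<epsilon> H)))
       = mtrace (tbasis d N) (mmult (tbasis d N)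
           (tensor_op N ((\<lambda>t. mmult (sbasis d) (evol d H (- \<epsilon>)) (Os t))
              (0 := mmult (sbasis d) (mmult (sbasis d) (evol d H (- \<epsilon>)) (Os 0))
                      (mmult (sbasis d) \<rho> (evol d H (\<epsilon> * real N))))))
           cshift)"
proof -
  let ?S = "sbasis d" and ?T = "tbasis d N"
  define U where "U = evol d H (- \<epsilon>)"
  define V where "V = evol d H (\<epsilon> * real N)"
  let ?Os' = "Os(0 := mmult ?S (mmult ?S (Os 0) \<rho>) V)"
  let ?F = "(\<lambda>t. mmult ?S U (Os t))(0 := mmult ?S (mmult ?S U (Os 0)) (mmult ?S \<rho> V))"
  have factors: "(\<lambda>t. mmult ?S U (?Os' t)) = ?F"
    by (simp add: fun_eq_iff mmult_assoc)
  have "vinner ?T (choi ?T (madj (tensor_op N Os))) (choi ?T (mmult ?T (local_op N 0 \<rho>) (expiS_tilde d N \<epsilon> H)))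
      = mtrace ?T (mmult ?T (tensor_op N Os) (mmult ?T (local_op N 0 \<rho>) (expiS_tilde d N \<epsilon> H)))"
    by (simp add: vinner_choi_madj)
  also have "\<dots> = mtrace ?T (mmult ?T (tensor_op N Os) (mmult ?T (local_op N 0 \<rho>)
                     (mmult ?T (local_op N 0 V) (mmult ?T cshift (tensor_op N (\<lambda>_. U))))))"
    unfolding U_def V_def using expiS_tilde_factor[OF assms]
    by (intro mtrace_cong mmult_cong mat_eq_on_refl)
  also have "\<dots> = mtrace ?T (mmult ?T (mmult ?T (tensor_op N (\<lambda>_. U))
                     (mmult ?T (mmult ?T (tensor_op N Os) (local_op N 0 \<rho>)) (local_op N 0 V))) cshift)"
    by (simp only: mtrace_mmult_commute[of ?T "tensor_op N (\<lambda>_. U)"] mmult_assoc)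
  also have "\<dots> = mtrace ?T (mmult ?T (tensor_op N ?F) cshift)"
  proof (intro mtrace_cong mmult_cong mat_eq_on_refl)
    have "mat_eq_on ?T (mmult ?T (mmult ?T (tensor_op N Os) (local_op N 0 \<rho>)) (local_op N 0 V))
            (tensor_op N ?Os')"
      using mat_eq_on_trans[OF mmult_cong[OF tensor_op_mmult_local_op[OF assms] mat_eq_on_refl]
          tensor_op_mmult_local_op[OF assms]]
      by simp
    then have "mat_eq_on ?T (mmult ?T (tensor_op N (\<lambda>_. U))
                 (mmult ?T (mmult ?T (tensor_op N Os) (local_op N 0 \<rho>)) (local_op N 0 V)))
                 (mmult ?T (tensor_op N (\<lambda>_. U)) (tensor_op N ?Os'))"
      by (rule mmult_cong[OF mat_eq_on_refl])
    also have "\<dots> = tensor_op N ?F"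
      unfolding tensor_op_mmult factors ..
    finally show "mat_eq_on ?T (mmult ?T (tensor_op N (\<lambda>_. U))
                    (mmult ?T (mmult ?T (tensor_op N Os) (local_op N 0 \<rho>)) (local_op N 0 V)))
                    (tensor_op N ?F)" .
  qed
  finally show ?thesis
    by (simp only: U_def V_def)
qed

theorem corollary3:
  fixes d N :: nat and \<epsilon> :: real
    and H \<rho> :: "nat \<Rightarrow> nat \<Rightarrow> complex"
    and Os :: "nat \<Rightarrow> nat \<Rightarrow> nat \<Rightarrow> complex"
  assumes "d \<ge> 1" and "N \<ge> 1" and "\<epsilon> > 0"
    and herm: "\<forall>i<d. \<forall>j<d. H i j = cnj (H j i)"
  shows "vinner (tbasis d N)
           (choi (tbasis d N) (madj (tensor_op N Os)))
           (choi (tbasis d N) (mmult (tbasis d N) (local_op N 0 \<rho>) (expiS_tilde d N \<epsilon> H)))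
       = mtrace (sbasis d)
           (mmult (sbasis d) \<rho>
              (mprod (sbasis d) (map (\<lambda>t. heis d H (\<epsilon> * real t) (Os t)) (rev [0..<N]))))"
proof -
  obtain n where N: "N = Suc n"
    using assms(2) by (cases N) auto
  let ?S = "sbasis d"
  define U where "U = evol d H (- \<epsilon>)"
  define V where "V = evol d H (\<epsilon> * real N)"
  define Q where "Q = mprod ?S (map (\<lambda>t. mmult ?S U (Os t)) (rev [0..<N]))"
  let ?F = "(\<lambda>t. mmult ?S U (Os t))(0 := mmult ?S (mmult ?S U (Os 0)) (mmult ?S \<rho> V))"
  have "vinner (tbasis d N) (choi (tbasis d N) (madj (tensor_op N Os)))
          (choi (tbasis d N) (mmult (tbasis d N) (local_op N 0 \<rho>) (expiS_tilde d N \<epsilon> H)))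
      = mtrace (tbasis d N) (mmult (tbasis d N) (tensor_op N ?F) cshift)"
    unfolding U_def V_def by (rule vinner_choi_expiS_tilde) (simp add: N)
  also have "\<dots> = mtrace ?S (mprod ?S (map ?F (rev [0..<N])))"
    by (simp only: N mtrace_tensor_op_cshift)
  also have "\<dots> = mtrace ?S (mmult ?S Q (mmult ?S \<rho> V))"
    unfolding Q_def N by (intro mtrace_cong mprod_rev_upt_update_0 finite_sbasis)
  also have "\<dots> = mtrace ?S (mmult ?S \<rho> (mmult ?S V Q))"
    by (simp only: mtrace_mmult_commute[of ?S Q] mmult_assoc)
  also have "\<dots> = mtrace ?S (mmult ?S \<rho> (mprod ?S (map (\<lambda>t. heis d H (\<epsilon> * real t) (Os t)) (rev [0..<N]))))"
    unfolding U_def V_def Q_def by (rule mtrace_cong[OF mmult_cong[OF mat_eq_on_refl mat_eq_on_sym[OF mprod_heis]]])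
  finally show ?thesis .
qed

end
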